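(* Let $\mathfrak{R}$ be either $\mathbb{F}_q$ ($q$ a prime power) or $\mathbb{Z}_k$ ($k\ge 2$), with character $\chi$ as in the context. Let $C$ and $D$ be two $\mathfrak{R}$-linear codes of length $n$ and $\bm{w}\in\mathfrak{R}^n$. Then (i) $\displaystyle \mathfrak{Jac}(C^{\perp},D,\bm{w}; x_{a} : a \in \mathfrak{R}^{3})=\frac{1}{|C|}\,\mathfrak{Jac}\Big(C,D,\bm{w};\ \sum_{b\in\mathfrak{R}}\chi(a_1 b)\,x_{(b,a_2,a_3)} : a\in\mathfrak{R}^3\Big)$; (ii) $\displaystyle \mathfrak{Jac}(C^{\perp},D^{\perp},\bm{w}; x_{a} : a \in \mathfrak{R}^{3})=\frac{1}{|C||D|}\,\mathfrak{Jac}\Big(C,D,\bm{w};\ \sum_{b_1,b_2\in\mathfrak{R}}\chi(a_1 b_1+a_2b_2)\,x_{(b_1,b_2,a_3)} : a\in\mathfrak{R}^3\Big)$, where on the right-hand sides each variable $x_{(a_1,a_2,a_3)}$ of $\mathfrak{Jac}(C,D,\bm{w};x_a:a\in\mathfrak{R}^3)$ is replaced by the indicated linear form.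
   Context: An $\mathbb{F}_q$-linear code of length $n$ is a subspace of $\mathbb{F}_q^n$; a $\mathbb{Z}_k$-linear code of length $n$ is an additive subgroup of $\mathbb{Z}_k^n$. For $\bm{u},\bm{v}\in\mathfrak{R}^n$, $\bm{u}\cdot\bm{v}=\sum_i u_iv_i$, and $C^\perp=\{\bm{v}\in\mathfrak{R}^n : \bm{u}\cdot\bm{v}=0 \ \forall \bm{u}\in C\}$. The character $\chi$: if $\mathfrak{R}=\mathbb{F}_q$, $q=p^f$, fix a root $\lambda$ of a primitive irreducible polynomial of degree $f$ over $\mathbb{F}_p$, write $\alpha=\alpha_0+\alpha_1\lambda+\cdots+\alpha_{f-1}\lambda^{f-1}$ ($\alpha_i\in\mathbb{F}_p$) and set $\chi(\alpha)=\zeta_p^{\alpha_0}$, $\zeta_p$ a primitive $p$-th root of unity; if $\mathfrak{R}=\mathbb{Z}_k$, $\chi(\alpha)=\zeta_k^{\alpha}$, $\zeta_k$ a primitive $k$-th root of unity. For $a\in\mathfrak{R}^3$, $h_a(\bm{u},\bm{v};\bm{w})=\#\{i:(u_i,v_i,w_i)=a\}$, and the complete joint Jacobi polynomial is $\mathfrak{Jac}(C,D,\bm{w};x_a : a\in\mathfrak{R}^3)=\sum_{\bm{u}\in C,\bm{v}\in D}\prod_{a\in\mathfrak{R}^3}x_a^{h_a(\bm{u},\bm{v};\bm{w})}$. *)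

theory Defs
  imports Complex_Main "HOL-Analysis.Finite_Cartesian_Product" "HOL-Computational_Algebra.Primes"
begin

definition prim_root_unity :: "nat \<Rightarrow> complex \<Rightarrow> bool" where
  "prim_root_unity m z \<longleftrightarrow> z ^ m = 1 \<and> (\<forall>j. 0 < j \<and> j < m \<longrightarrow> z ^ j \<noteq> 1)"

text \<open>Setting 1: the ring 'a is a finite field F_q, q = p^f, p = CHAR('a), and chi is the
  paper's character: lam is a root of a primitive irreducible polynomial of degree f over F_p
  (i.e. lam generates the multiplicative group, order q-1), and
  chi(a_0 + a_1 lam + ... + a_(f-1) lam^(f-1)) = zeta_p ^ a_0 with zeta_p a primitive p-th root of unity.\<close>
definition Fq_setting :: "('a::{comm_ring_1,finite} \<Rightarrow> complex) \<Rightarrow> bool" where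
  "Fq_setting chr \<longleftrightarrow>
     (\<forall>x::'a. x \<noteq> 0 \<longrightarrow> (\<exists>y. x * y = 1)) \<and> prime (CHAR('a)) \<and>
     (\<exists>lam f \<zeta>.
        f \<ge> 1 \<and> CARD('a) = CHAR('a) ^ f \<and>
        lam ^ (CARD('a) - 1) = 1 \<and> (\<forall>j. 0 < j \<and> j < CARD('a) - 1 \<longrightarrow> lam ^ j \<noteq> 1) \<and>
        prim_root_unity (CHAR('a)) \<zeta> \<and>
        (\<forall>(c :: nat \<Rightarrow> nat).  (\<forall>i<f. c i < CHAR('a)) \<longrightarrow>
            chr (\<Sum>i<f. of_nat (c i) * lam ^ i) = \<zeta> ^ (c 0)))"

text \<open>Setting 2: the ring 'a is Z_k (k = CHAR('a) \<ge> 2; every element is the image of a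
  natural number), and chi(m) = zeta_k ^ m with zeta_k a primitive k-th root of unity.\<close>
definition Zk_setting :: "('a::{comm_ring_1,finite} \<Rightarrow> complex) \<Rightarrow> bool" where
  "Zk_setting chr \<longleftrightarrow>
     CHAR('a) \<ge> 2 \<and> (\<forall>x::'a. \<exists>m::nat. x = of_nat m) \<and>
     (\<exists>\<zeta>::complex. prim_root_unity (CHAR('a)) \<zeta> \<and> (\<forall>m::nat. chr (of_nat m) = \<zeta> ^ m))"

definition subspace_code :: "('a::comm_ring_1 ^ 'n) set \<Rightarrow> bool" where
  "subspace_code C \<longleftrightarrow> 0 \<in> C \<and> (\<forall>u\<in>C. \<forall>v\<in>C. u + v \<in> C) \<and> (\<forall>c. \<forall>u\<in>C. c *s u \<in> C)"

definition additive_code :: "('a::comm_ring_1 ^ 'n) set \<Rightarrow> bool" where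
  "additive_code C \<longleftrightarrow> 0 \<in> C \<and> (\<forall>u\<in>C. \<forall>v\<in>C. u + v \<in> C) \<and> (\<forall>u\<in>C. - u \<in> C)"

definition dotp :: "'a::comm_ring_1 ^ 'n \<Rightarrow> 'a ^ 'n \<Rightarrow> 'a" where
  "dotp u v = (\<Sum>i\<in>UNIV. u $ i * v $ i)"

definition dual_code :: "('a::comm_ring_1 ^ 'n) set \<Rightarrow> ('a ^ 'n) set" where
  "dual_code C = {v. \<forall>u\<in>C. dotp u v = 0}"

definition hcount :: "'a \<times> 'a \<times> 'a \<Rightarrow> 'a ^ 'n \<Rightarrow> 'a ^ 'n \<Rightarrow> 'a ^ 'n \<Rightarrow> nat" where
  "hcount a u v w = card {i. (u $ i, v $ i, w $ i) = a}"

text \<open>Complete joint Jacobi polynomial, evaluated at an assignment x of complex values to the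
  variables x_a, a \<in> R^3.\<close>
definition jac :: "('a::finite ^ 'n) set \<Rightarrow> ('a ^ 'n) set \<Rightarrow> 'a ^ 'n
                   \<Rightarrow> ('a \<times> 'a \<times> 'a \<Rightarrow> complex) \<Rightarrow> complex" where
  "jac C D w x = (\<Sum>u\<in>C. \<Sum>v\<in>D. \<Prod>a\<in>UNIV. x a ^ hcount a u v w)"

end

theory Submission
  imports Defs "HOL-Library.FuncSet"
begin

text \<open>
  Both identities rest on the orthogonality relation
  \<open>\<Sum>u\<in>C. \<chi>(u\<cdot>b) = |C| [b \<in> C\<^sup>\<bottom>]\<close>: after substituting the linear forms, the
  product over the coordinates of \<open>u\<close>, \<open>v\<close>, \<open>w\<close> expands into a sum over all
  vectors \<open>b\<close> weighted by \<open>\<chi>(u\<cdot>b)\<close>, and summing over \<open>u \<in> C\<close> first kills every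
  \<open>b \<notin> C\<^sup>\<bottom>\<close>. This proves (i); (ii) is (i) applied in each of the two code slots.

  The orthogonality relation needs \<open>\<chi>\<close> to be additive. Over \<open>\<bbbF>\<^sub>q\<close> the character
  is only prescribed on the sums \<open>\<Sum>i<f. c\<^sub>i \<lambda>\<^sup>i\<close>, so one must show that the first
  \<open>f\<close> powers of \<open>\<lambda>\<close> span \<open>\<bbbF>\<^sub>q\<close> over \<open>\<bbbF>\<^sub>p\<close>. This is a counting argument: the
  span of the first \<open>d\<close> powers grows by a factor \<open>p\<close> with each new power, unless
  it is already closed under multiplication by \<open>\<lambda>\<close>; in that case it contains
  every power of the generator \<open>\<lambda>\<close> and hence everything.
\<close>

section \<open>Spanning a finite field by powers of a generator\<close>

definition power_span :: "'a::comm_ring_1 \<Rightarrow> nat \<Rightarrow> 'a set" where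
  "power_span lam d = range (\<lambda>c. \<Sum>i<d. of_nat (c i) * lam ^ i)"

lemma sum_in_power_span: "(\<Sum>i<d. of_nat (c i) * lam ^ i) \<in> power_span lam d"
  unfolding power_span_def by (rule rangeI)

lemma power_span_Suc:
  "power_span lam (Suc d) = {v + of_nat j * lam ^ d | v j. v \<in> power_span lam d}"
proof safe
  fix x assume "x \<in> power_span lam (Suc d)"
  then obtain c where "x = (\<Sum>i<d. of_nat (c i) * lam ^ i) + of_nat (c d) * lam ^ d"
    by (auto simp: power_span_def)
  then show "\<exists>v j. x = v + of_nat j * lam ^ d \<and> v \<in> power_span lam d"
    using sum_in_power_span by blast
next
  fix v j assume "v \<in> power_span lam d"
  then obtain c where "v = (\<Sum>i<d. of_nat (c i) * lam ^ i)"
    by (auto simp: power_span_def)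
  then have "v + of_nat j * lam ^ d = (\<Sum>i<Suc d. of_nat ((c(d := j)) i) * lam ^ i)"
    by simp
  then show "v + of_nat j * lam ^ d \<in> power_span lam (Suc d)"
    by (simp only: sum_in_power_span)
qed

lemma zero_in_power_span: "0 \<in> power_span lam d"
  using sum_in_power_span[where c = "\<lambda>_. 0"] by simp

lemma add_in_power_span:
  assumes "u \<in> power_span lam d" "v \<in> power_span lam d"
  shows "u + v \<in> power_span lam d"
proof -
  obtain c c' where "u = (\<Sum>i<d. of_nat (c i) * lam ^ i)" "v = (\<Sum>i<d. of_nat (c' i) * lam ^ i)"
    using assms by (auto simp: power_span_def)
  then have "u + v = (\<Sum>i<d. of_nat (c i + c' i) * lam ^ i)"
    by (simp add: sum.distrib distrib_right)
  then show ?thesis by (simp only: sum_in_power_span)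
qed

lemma of_nat_mult_in_power_span:
  assumes "v \<in> power_span lam d"
  shows "of_nat m * v \<in> power_span lam d"
proof -
  obtain c where "v = (\<Sum>i<d. of_nat (c i) * lam ^ i)"
    using assms by (auto simp: power_span_def)
  then have "of_nat m * v = (\<Sum>i<d. of_nat (m * c i) * lam ^ i)"
    by (simp add: sum_distrib_left mult.assoc)
  then show ?thesis by (simp only: sum_in_power_span)
qed

lemma uminus_in_power_span:
  fixes lam :: "'a::{comm_ring_1,finite}"
  assumes "v \<in> power_span lam d"
  shows "- v \<in> power_span lam d"
proof -
  have "CHAR('a) > 0" by (simp add: finite_imp_CHAR_pos)
  then have "(of_nat (CHAR('a) - 1) :: 'a) = - 1"
    by (simp add: of_nat_diff)
  then show ?thesis using of_nat_mult_in_power_span[OF assms, of "CHAR('a) - 1"] by simp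
qed

lemma one_in_power_span: "1 \<in> power_span lam (Suc d)"
proof -
  have "(\<Sum>i<Suc d. of_nat ((\<lambda>i. if i = 0 then 1 else 0) i) * lam ^ i) = 1"
    by (simp only: sum.lessThan_Suc_shift) simp
  then show ?thesis by (metis sum_in_power_span)
qed

lemma mult_in_power_span:
  assumes "v \<in> power_span lam d"
  shows "lam * v \<in> power_span lam (Suc d)"
proof -
  obtain c where c: "v = (\<Sum>i<d. of_nat (c i) * lam ^ i)"
    using assms by (auto simp: power_span_def)
  have "lam * v = (\<Sum>i<Suc d. of_nat ((\<lambda>i. if i = 0 then 0 else c (i - 1)) i) * lam ^ i)"
    unfolding c by (simp only: sum.lessThan_Suc_shift) (simp add: sum_distrib_left mult_ac)
  then show ?thesis by (simp only: sum_in_power_span)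
qed

lemma power_span_mono: "power_span lam d \<subseteq> power_span lam (Suc d)"
proof
  fix v assume "v \<in> power_span lam d"
  then have "v + of_nat 0 * lam ^ d \<in> power_span lam (Suc d)"
    unfolding power_span_Suc by blast
  then show "v \<in> power_span lam (Suc d)" by simp
qed

lemma power_in_power_span:
  assumes "lam ^ d \<in> power_span lam d"
  shows "lam ^ j \<in> power_span lam d"
proof -
  have "power_span lam (Suc d) \<subseteq> power_span lam d"
    unfolding power_span_Suc
    using assms add_in_power_span of_nat_mult_in_power_span by blast
  then have closed: "1 \<in> power_span lam d" "\<And>v. v \<in> power_span lam d \<Longrightarrow> lam * v \<in> power_span lam d"
    using one_in_power_span mult_in_power_span by blast+
  show ?thesis by (induction j) (simp_all add: closed)
qed

lemma power_mod_eq_power: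
  fixes z :: "'a::monoid_mult"
  assumes "z ^ p = 1"
  shows "z ^ (n mod p) = z ^ n"
proof -
  have "z ^ n = z ^ (p * (n div p) + n mod p)"
    by simp
  also have "\<dots> = (z ^ p) ^ (n div p) * z ^ (n mod p)"
    by (simp only: power_add power_mult)
  finally show ?thesis
    using assms by simp
qed

lemma inj_on_power_if_order:
  fixes lam :: "'a::comm_semiring_1"
  assumes "lam dvd 1" and order: "\<forall>j. 0 < j \<and> j < n \<longrightarrow> lam ^ j \<noteq> 1"
  shows "inj_on (\<lambda>j. lam ^ j) {..<n}"
proof -
  have "lam ^ i \<noteq> lam ^ j" if "i < j" "j < n" for i j
  proof
    assume eq: "lam ^ i = lam ^ j"
    obtain y where "1 = lam ^ i * y"
      using dvd_power_same[OF \<open>lam dvd 1\<close>, of i] by (auto elim: dvdE)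
    then have y: "lam ^ i * y = 1" by (rule sym)
    have "lam ^ (j - i) = (y * lam ^ i) * lam ^ (j - i)"
      using y by (simp add: mult.commute)
    also have "\<dots> = y * lam ^ j"
      using \<open>i < j\<close> by (simp add: mult.assoc flip: power_add)
    also have "\<dots> = 1"
      using eq y by (simp add: mult.commute)
    finally show False
      using order[rule_format, of "j - i"] that by simp
  qed
  then show ?thesis
    by (intro inj_onI) (metis lessThan_iff linorder_neqE_nat)
qed

lemma nonzero_eq_power_of_generator:
  fixes lam x :: "'a::{comm_ring_1,finite}"
  assumes period: "lam ^ (CARD('a) - 1) = 1"
    and order: "\<forall>j. 0 < j \<and> j < CARD('a) - 1 \<longrightarrow> lam ^ j \<noteq> 1"
    and "x \<noteq> 0"
  shows "\<exists>j. x = lam ^ j"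
proof -
  define q where "q = CARD('a)"
  have "(1::'a) \<noteq> 0"
    using \<open>x \<noteq> 0\<close> by (metis mult_1 mult_zero_left)
  then have "card {0::'a, 1} \<le> q"
    unfolding q_def by (intro card_mono) auto
  with \<open>(1::'a) \<noteq> 0\<close> have "q \<ge> 2" by simp
  then have "q - 1 = Suc (q - 2)" by simp
  then have "lam dvd 1"
    using period unfolding q_def by (metis dvd_triv_left power_Suc)
  then have "lam ^ i dvd 1" for i
    using dvd_power_same[of lam 1 i] by simp
  then have nonzero: "lam ^ i \<noteq> 0" for i
    using \<open>(1::'a) \<noteq> 0\<close> by (metis dvd_0_left_iff)
  have "inj_on (\<lambda>j. lam ^ j) {..<q - 1}"
    using inj_on_power_if_order[OF \<open>lam dvd 1\<close>] order unfolding q_def by blast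
  then have "card ((\<lambda>j. lam ^ j) ` {..<q - 1}) = card (UNIV - {0::'a})"
    by (simp add: card_image card_Diff_singleton q_def)
  moreover have "(\<lambda>j. lam ^ j) ` {..<q - 1} \<subseteq> UNIV - {0}"
    using nonzero by auto
  ultimately have "(\<lambda>j. lam ^ j) ` {..<q - 1} = UNIV - {0}"
    by (simp add: card_subset_eq)
  then show ?thesis using \<open>x \<noteq> 0\<close> by blast
qed

lemma of_nat_invertible_if_prime_CHAR:
  assumes "prime CHAR('a::comm_ring_1)" and "\<not> CHAR('a) dvd k"
  shows "\<exists>m. of_nat m * (of_nat k :: 'a) = 1"
proof -
  have "coprime k CHAR('a)"
    using prime_imp_coprime[OF assms] by (simp add: coprime_commute)
  moreover have "k \<noteq> 0" using assms(2) by (metis dvd_0_right)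
  ultimately obtain x y where "k * x = CHAR('a) * y + 1"
    using bezout_nat[of k "CHAR('a)"] by auto
  then have "(of_nat (k * x) :: 'a) = of_nat (CHAR('a) * y + 1)" by simp
  then have "of_nat x * (of_nat k :: 'a) = 1" by (simp add: mult.commute)
  then show ?thesis by blast
qed

lemma of_nat_mult_power_notin_power_span:
  fixes lam :: "'a::{comm_ring_1,finite}"
  assumes prime: "prime CHAR('a)" and new: "lam ^ d \<notin> power_span lam d"
    and "0 < k" "k < CHAR('a)"
  shows "of_nat k * lam ^ d \<notin> power_span lam d"
proof
  assume "of_nat k * lam ^ d \<in> power_span lam d"
  moreover obtain m where "of_nat m * (of_nat k :: 'a) = 1"
    using of_nat_invertible_if_prime_CHAR[OF prime, of k] assms(3,4) nat_dvd_not_less by blast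
  ultimately have "of_nat m * (of_nat k * lam ^ d) \<in> power_span lam d"
    using of_nat_mult_in_power_span by blast
  then have "lam ^ d \<in> power_span lam d"
    using \<open>of_nat m * of_nat k = 1\<close> by (simp flip: mult.assoc)
  then show False
    using new by blast
qed

lemma card_power_span_Suc_ge:
  fixes lam :: "'a::{comm_ring_1,finite}"
  assumes prime: "prime CHAR('a)" and new: "lam ^ d \<notin> power_span lam d"
  shows "CHAR('a) * card (power_span lam d) \<le> card (power_span lam (Suc d))"
proof -
  define p V where "p = CHAR('a)" and "V = power_span lam d"
  have collision: False
    if "v \<in> V" "v' \<in> V" "j < j'" "j' < p" "v + of_nat j * lam ^ d = v' + of_nat j' * lam ^ d"
    for v v' j j'
  proof -
    have "of_nat j' = (of_nat j + of_nat (j' - j) :: 'a)"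
      using \<open>j < j'\<close> by (simp flip: of_nat_add)
    then have "of_nat (j' - j) * lam ^ d = v + - v'"
      using that(5) by (simp add: algebra_simps)
    also have "\<dots> \<in> V"
      using that(1,2) add_in_power_span uminus_in_power_span unfolding V_def by blast
    finally have "of_nat (j' - j) * lam ^ d \<in> V" .
    moreover have "0 < j' - j" "j' - j < p"
      using that(3,4) by auto
    ultimately show False
      using of_nat_mult_power_notin_power_span[OF prime new] unfolding p_def V_def by blast
  qed
  have "inj_on (\<lambda>(v, j). v + of_nat j * lam ^ d) (V \<times> {..<p})"
  proof (rule inj_onI, clarify)
    fix v j v' j'
    assume "v \<in> V" "j < p" "v' \<in> V" "j' < p" "v + of_nat j * lam ^ d = v' + of_nat j' * lam ^ d"
    then show "v = v' \<and> j = j'"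
      using collision[of v v' j j'] collision[of v' v j' j] by (cases j j' rule: linorder_cases) auto
  qed
  moreover have "(\<lambda>(v, j). v + of_nat j * lam ^ d) ` (V \<times> {..<p}) \<subseteq> power_span lam (Suc d)"
    unfolding power_span_Suc V_def by auto
  ultimately have "card (V \<times> {..<p}) \<le> card (power_span lam (Suc d))"
    by (intro card_inj_on_le) auto
  then show ?thesis
    unfolding p_def V_def by (simp add: card_cartesian_product mult.commute)
qed

lemma power_span_eq_UNIV:
  fixes lam :: "'a::{comm_ring_1,finite}"
  assumes prime: "prime CHAR('a)" and card: "CARD('a) = CHAR('a) ^ f"
    and period: "lam ^ (CARD('a) - 1) = 1"
    and order: "\<forall>j. 0 < j \<and> j < CARD('a) - 1 \<longrightarrow> lam ^ j \<noteq> 1"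
  shows "power_span lam f = UNIV"
proof -
  have "power_span lam d = UNIV \<or> CHAR('a) ^ d \<le> card (power_span lam d)" for d
  proof (induction d)
    case 0
    then show ?case using zero_in_power_span by (auto simp: Suc_le_eq card_gt_0_iff)
  next
    case (Suc d)
    show ?case
    proof (cases "lam ^ d \<in> power_span lam d")
      case True
      have "x \<in> power_span lam d" for x
      proof (cases "x = 0")
        case False
        then obtain j where "x = lam ^ j"
          using nonzero_eq_power_of_generator[OF period order] by blast
        then show ?thesis
          using power_in_power_span[OF True] by simp
      qed (simp add: zero_in_power_span)
      then have "power_span lam d = UNIV" by blast
      then show ?thesis using power_span_mono[of lam d] by blast
    next
      case False
      then have "CHAR('a) ^ d \<le> card (power_span lam d)"
        using Suc.IH by blast
      then have "CHAR('a) ^ Suc d \<le> CHAR('a) * card (power_span lam d)"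
        by simp
      then show ?thesis
        using card_power_span_Suc_ge[OF prime False] by linarith
    qed
  qed
  moreover have "card (power_span lam f) \<le> CARD('a)"
    by (simp add: card_mono)
  ultimately have "card (power_span lam f) = CARD('a)"
    using card by (metis le_antisym)
  then show ?thesis
    by (simp add: card_subset_eq)
qed

section \<open>Additive characters\<close>

definition additive_char :: "('a::monoid_add \<Rightarrow> 'b::monoid_mult) \<Rightarrow> bool" where
  "additive_char chr \<longleftrightarrow> chr 0 = 1 \<and> (\<forall>x y. chr (x + y) = chr x * chr y)"

lemma additive_char_sum:
  fixes chr :: "'a::comm_monoid_add \<Rightarrow> 'b::comm_monoid_mult"
  assumes "additive_char chr"
  shows "chr (\<Sum>i\<in>A. t i) = (\<Prod>i\<in>A. chr (t i))"
  using assms unfolding additive_char_def by (induction A rule: infinite_finite_induct) auto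

lemma of_nat_mod_CHAR: "(of_nat (n mod CHAR('a)) :: 'a::semiring_1) = of_nat n"
proof -
  have "(of_nat n :: 'a) = of_nat (CHAR('a) * (n div CHAR('a)) + n mod CHAR('a))"
    by simp
  also have "\<dots> = of_nat (n mod CHAR('a))"
    by (simp only: of_nat_add of_nat_mult of_nat_CHAR) simp
  finally show ?thesis by simp
qed

lemma Fq_setting_representation:
  fixes chr :: "'a::{comm_ring_1,finite} \<Rightarrow> complex"
  assumes "Fq_setting chr"
  obtains f lam \<zeta> where "f \<ge> 1" and "power_span lam f = UNIV" and "\<zeta> \<noteq> 1"
    and "\<And>c. chr (\<Sum>i<f. of_nat (c i) * lam ^ i) = \<zeta> ^ c 0"
proof -
  obtain lam f \<zeta> where prime: "prime CHAR('a)" and "f \<ge> 1"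
    and card: "CARD('a) = CHAR('a) ^ f"
    and period: "lam ^ (CARD('a) - 1) = 1"
    and order: "\<forall>j. 0 < j \<and> j < CARD('a) - 1 \<longrightarrow> lam ^ j \<noteq> 1"
    and root: "prim_root_unity CHAR('a) \<zeta>"
    and chr: "\<forall>c. (\<forall>i<f. c i < CHAR('a)) \<longrightarrow> chr (\<Sum>i<f. of_nat (c i) * lam ^ i) = \<zeta> ^ c 0"
    using assms unfolding Fq_setting_def by blast
  have "CHAR('a) > 1"
    using prime prime_gt_1_nat by blast
  moreover have "\<zeta> ^ CHAR('a) = 1" "\<forall>j. 0 < j \<and> j < CHAR('a) \<longrightarrow> \<zeta> ^ j \<noteq> 1"
    using root unfolding prim_root_unity_def by blast+
  ultimately have "\<zeta> \<noteq> 1"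
    by force
  have "chr (\<Sum>i<f. of_nat (c i) * lam ^ i) = \<zeta> ^ c 0" for c
  proof -
    have "(\<Sum>i<f. of_nat (c i) * lam ^ i) = (\<Sum>i<f. of_nat (c i mod CHAR('a)) * lam ^ i)"
      by (simp add: of_nat_mod_CHAR)
    also have "chr \<dots> = \<zeta> ^ (c 0 mod CHAR('a))"
      using chr \<open>CHAR('a) > 1\<close> by simp
    finally show ?thesis
      using power_mod_eq_power[OF \<open>\<zeta> ^ CHAR('a) = 1\<close>] by simp
  qed
  then show thesis
    using that \<open>f \<ge> 1\<close> power_span_eq_UNIV[OF prime card period order] \<open>\<zeta> \<noteq> 1\<close> by blast
qed

lemma additive_char_if_Fq_setting:
  fixes chr :: "'a::{comm_ring_1,finite} \<Rightarrow> complex"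
  assumes "Fq_setting chr"
  shows "additive_char chr"
proof -
  obtain f lam \<zeta> where "f \<ge> 1" and span: "power_span lam f = UNIV" and "\<zeta> \<noteq> 1"
    and rep: "\<And>c. chr (\<Sum>i<f. of_nat (c i) * lam ^ i) = \<zeta> ^ c 0"
    by (rule Fq_setting_representation[OF assms]) (rule that)
  have "chr (x + y) = chr x * chr y" for x y
  proof -
    have "x \<in> power_span lam f" "y \<in> power_span lam f"
      by (simp_all add: span)
    then obtain c c' where x: "x = (\<Sum>i<f. of_nat (c i) * lam ^ i)"
      and y: "y = (\<Sum>i<f. of_nat (c' i) * lam ^ i)"
      by (auto simp: power_span_def)
    have "x + y = (\<Sum>i<f. of_nat (c i + c' i) * lam ^ i)"
      unfolding x y by (simp add: sum.distrib distrib_right)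
    then have "chr (x + y) = \<zeta> ^ (c 0 + c' 0)"
      by (simp only: rep)
    also have "\<dots> = chr x * chr y"
      unfolding x y rep by (simp add: power_add)
    finally show ?thesis .
  qed
  moreover have "chr 0 = 1"
    using rep[of "\<lambda>_. 0"] by simp
  ultimately show ?thesis
    unfolding additive_char_def by blast
qed

lemma char_one_neq_one_if_Fq_setting:
  fixes chr :: "'a::{comm_ring_1,finite} \<Rightarrow> complex"
  assumes "Fq_setting chr"
  shows "chr 1 \<noteq> 1"
proof -
  obtain f lam \<zeta> where "f \<ge> 1" and "power_span lam f = UNIV" and "\<zeta> \<noteq> 1"
    and rep: "\<And>c. chr (\<Sum>i<f. of_nat (c i) * lam ^ i) = \<zeta> ^ c 0"
    by (rule Fq_setting_representation[OF assms]) (rule that)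
  then obtain e where f: "f = Suc e"
    using not0_implies_Suc by fastforce
  have "(\<Sum>i<f. of_nat ((\<lambda>i. if i = 0 then 1 else 0) i) * lam ^ i) = 1"
    unfolding f by (simp only: sum.lessThan_Suc_shift) simp
  then show ?thesis
    using rep[of "\<lambda>i. if i = 0 then 1 else 0"] \<open>\<zeta> \<noteq> 1\<close> by simp
qed

lemma additive_char_if_Zk_setting:
  fixes chr :: "'a::{comm_ring_1,finite} \<Rightarrow> complex"
  assumes "Zk_setting chr"
  shows "additive_char chr"
proof -
  obtain \<zeta> where all: "\<forall>x::'a. \<exists>m. x = of_nat m" and chr: "\<forall>m. chr (of_nat m) = \<zeta> ^ m"
    using assms unfolding Zk_setting_def by blast
  have "chr (x + y) = chr x * chr y" for x y
  proof -
    obtain m m' where "x = of_nat m" "y = of_nat m'"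
      using all by blast
    then show ?thesis
      using chr[rule_format, of "m + m'"] chr by (simp add: power_add)
  qed
  moreover have "chr 0 = 1"
    using chr[rule_format, of 0] by simp
  ultimately show ?thesis
    unfolding additive_char_def by blast
qed

lemma char_neq_one_if_Zk_setting:
  fixes chr :: "'a::{comm_ring_1,finite} \<Rightarrow> complex"
  assumes "Zk_setting chr" and "x \<noteq> 0"
  shows "chr x \<noteq> 1"
proof -
  obtain \<zeta> where "CHAR('a) \<ge> 2" and all: "\<forall>x::'a. \<exists>m. x = of_nat m"
    and root: "prim_root_unity CHAR('a) \<zeta>" and chr: "\<forall>m. chr (of_nat m) = \<zeta> ^ m"
    using assms(1) unfolding Zk_setting_def by blast
  obtain m where m: "x = of_nat m"
    using all by blast
  then have "\<not> CHAR('a) dvd m"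
    using \<open>x \<noteq> 0\<close> by (simp add: of_nat_eq_0_iff_char_dvd)
  then have "0 < m mod CHAR('a)" "m mod CHAR('a) < CHAR('a)"
    using \<open>CHAR('a) \<ge> 2\<close> by (auto simp: mod_greater_zero_iff_not_dvd)
  then have "\<zeta> ^ (m mod CHAR('a)) \<noteq> 1"
    using root unfolding prim_root_unity_def by blast
  moreover have "\<zeta> ^ CHAR('a) = 1"
    using root unfolding prim_root_unity_def by blast
  ultimately show ?thesis
    using m chr power_mod_eq_power[of \<zeta> "CHAR('a)" m] by simp
qed

section \<open>Orthogonality relation for codes\<close>

lemma dotp_add_left: "dotp (u + u') v = dotp u v + dotp u' v"
  unfolding dotp_def by (simp add: sum.distrib distrib_right)

lemma dotp_scale_left: "dotp (c *s u) v = c * dotp u v"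
  unfolding dotp_def by (simp add: sum_distrib_left mult.assoc)

lemma additive_code_if_subspace_code:
  assumes "subspace_code C"
  shows "additive_code C"
proof -
  have "- u \<in> C" if "u \<in> C" for u
  proof -
    have "(- 1) *s u \<in> C"
      using assms that unfolding subspace_code_def by blast
    moreover have "(- 1) *s u = - u"
      by (simp add: vec_eq_iff)
    ultimately show ?thesis by simp
  qed
  then show ?thesis
    using assms unfolding subspace_code_def additive_code_def by blast
qed

definition detects_dual :: "('a::comm_ring_1 \<Rightarrow> complex) \<Rightarrow> ('a ^ 'n) set \<Rightarrow> bool" where
  "detects_dual chr C \<longleftrightarrow> (\<forall>b. b \<notin> dual_code C \<longrightarrow> (\<exists>u\<in>C. chr (dotp u b) \<noteq> 1))"

lemma detects_dual_if_subspace_code: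
  fixes chr :: "'a::comm_ring_1 \<Rightarrow> complex" and C :: "('a ^ 'n) set"
  assumes invertible: "\<forall>x::'a. x \<noteq> 0 \<longrightarrow> (\<exists>y. x * y = 1)" and "chr 1 \<noteq> 1"
    and "subspace_code C"
  shows "detects_dual chr C"
  unfolding detects_dual_def
proof (intro allI impI)
  fix b assume "b \<notin> dual_code C"
  then obtain u where "u \<in> C" and "dotp u b \<noteq> 0"
    by (auto simp: dual_code_def)
  then obtain y where "dotp u b * y = 1"
    using invertible by auto
  then have "chr (dotp (y *s u) b) \<noteq> 1"
    using \<open>chr 1 \<noteq> 1\<close> by (simp add: dotp_scale_left mult.commute)
  moreover have "y *s u \<in> C"
    using \<open>subspace_code C\<close> \<open>u \<in> C\<close> unfolding subspace_code_def by simp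
  ultimately show "\<exists>u\<in>C. chr (dotp u b) \<noteq> 1"
    by blast
qed

lemma detects_dual_if_nontrivial:
  fixes chr :: "'a::comm_ring_1 \<Rightarrow> complex" and C :: "('a ^ 'n) set"
  assumes "\<forall>x. x \<noteq> 0 \<longrightarrow> chr x \<noteq> 1"
  shows "detects_dual chr C"
  using assms unfolding detects_dual_def dual_code_def by blast

lemma sum_char_dotp:
  fixes chr :: "'a::comm_ring_1 \<Rightarrow> complex"
  assumes chr: "additive_char chr" and "additive_code C" and "detects_dual chr C"
  shows "(\<Sum>u\<in>C. chr (dotp u b)) = (if b \<in> dual_code C then of_nat (card C) else 0)"
proof (cases "b \<in> dual_code C")
  case True
  then show ?thesis
    using chr unfolding dual_code_def additive_char_def by simp
next
  case False
  then obtain u0 where "u0 \<in> C" and nontrivial: "chr (dotp u0 b) \<noteq> 1"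
    using \<open>detects_dual chr C\<close> unfolding detects_dual_def by blast
  have "(\<lambda>u. u0 + u) ` C = C"
  proof
    show "(\<lambda>u. u0 + u) ` C \<subseteq> C"
      using \<open>additive_code C\<close> \<open>u0 \<in> C\<close> unfolding additive_code_def by blast
    show "C \<subseteq> (\<lambda>u. u0 + u) ` C"
    proof
      fix v assume "v \<in> C"
      then have "- u0 + v \<in> C"
        using \<open>additive_code C\<close> \<open>u0 \<in> C\<close> unfolding additive_code_def by blast
      then show "v \<in> (\<lambda>u. u0 + u) ` C"
        by (rule rev_image_eqI) simp
    qed
  qed
  then have "(\<Sum>u\<in>C. chr (dotp u b)) = (\<Sum>u\<in>(\<lambda>u. u0 + u) ` C. chr (dotp u b))"
    by simp
  also have "\<dots> = (\<Sum>u\<in>C. chr (dotp (u0 + u) b))"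
    by (subst sum.reindex) (auto simp: inj_on_def)
  also have "\<dots> = chr (dotp u0 b) * (\<Sum>u\<in>C. chr (dotp u b))"
    using chr by (simp add: additive_char_def dotp_add_left sum_distrib_left)
  finally have "(1 - chr (dotp u0 b)) * (\<Sum>u\<in>C. chr (dotp u b)) = 0"
    by (simp add: algebra_simps)
  then show ?thesis
    using False nontrivial by simp
qed

section \<open>MacWilliams identities for joint Jacobi polynomials\<close>

lemma jac_eq_sum_prod: "jac C D w x = (\<Sum>u\<in>C. \<Sum>v\<in>D. \<Prod>i\<in>UNIV. x (u $ i, v $ i, w $ i))"
proof -
  have "(\<Prod>a\<in>UNIV. x a ^ hcount a u v w) = (\<Prod>i\<in>UNIV. x (u $ i, v $ i, w $ i))" for u v
  proof -
    have "(\<Prod>i\<in>UNIV. x (u $ i, v $ i, w $ i)) =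
          (\<Prod>a\<in>UNIV. \<Prod>i\<in>{i \<in> UNIV. (u $ i, v $ i, w $ i) = a}. x (u $ i, v $ i, w $ i))"
      by (rule prod.group[symmetric]) auto
    also have "\<dots> = (\<Prod>a\<in>UNIV. x a ^ hcount a u v w)"
      unfolding hcount_def by (intro prod.cong refl) simp
    finally show ?thesis by simp
  qed
  then show ?thesis
    unfolding jac_def by simp
qed

lemma prod_sum_eq_sum_vec:
  fixes F :: "'n::finite \<Rightarrow> 'a::finite \<Rightarrow> 'b::comm_semiring_1"
  shows "(\<Prod>i\<in>UNIV. \<Sum>y\<in>UNIV. F i y) = (\<Sum>b::'a ^ 'n\<in>UNIV. \<Prod>i\<in>UNIV. F i (b $ i))"
proof -
  have "(\<Prod>i\<in>UNIV. \<Sum>y\<in>UNIV. F i y) = (\<Sum>g\<in>UNIV. \<Prod>i\<in>UNIV. F i (g i))"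
    using prod_sum_PiE[of UNIV "\<lambda>_. UNIV" F] by simp
  also have "\<dots> = (\<Sum>b::'a ^ 'n\<in>UNIV. \<Prod>i\<in>UNIV. F i (b $ i))"
    by (rule sum.reindex_bij_witness[where i = vec_nth and j = vec_lambda]) auto
  finally show ?thesis .
qed

lemma jac_swap: "jac C D w x = jac D C w (\<lambda>(a1, a2, a3). x (a2, a1, a3))"
  unfolding jac_eq_sum_prod by (subst sum.swap) simp

lemma jac_dual_left:
  fixes chr :: "'a::{comm_ring_1,finite} \<Rightarrow> complex" and C D :: "('a ^ 'n) set"
  assumes chr: "additive_char chr" and "additive_code C" and "detects_dual chr C"
  shows "of_nat (card C) * jac (dual_code C) D w x =
         jac C D w (\<lambda>(a1, a2, a3). \<Sum>b\<in>UNIV. chr (a1 * b) * x (b, a2, a3))"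
proof -
  define P where "P b v = (\<Prod>i\<in>UNIV. x (b $ i, v $ i, w $ i))" for b v :: "'a ^ 'n"
  have expand: "(\<Prod>i\<in>UNIV. \<Sum>b\<in>UNIV. chr (u $ i * b) * x (b, v $ i, w $ i)) =
                (\<Sum>b\<in>UNIV. chr (dotp u b) * P b v)" for u v :: "'a ^ 'n"
    unfolding prod_sum_eq_sum_vec P_def dotp_def additive_char_sum[OF chr]
    by (simp add: prod.distrib)
  have "jac C D w (\<lambda>(a1, a2, a3). \<Sum>b\<in>UNIV. chr (a1 * b) * x (b, a2, a3)) =
        (\<Sum>u\<in>C. \<Sum>v\<in>D. \<Sum>b\<in>UNIV. chr (dotp u b) * P b v)"
    unfolding jac_eq_sum_prod by (simp add: expand)
  also have "\<dots> = (\<Sum>v\<in>D. \<Sum>b\<in>UNIV. \<Sum>u\<in>C. chr (dotp u b) * P b v)"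
    by (subst sum.swap, rule sum.cong[OF refl], rule sum.swap)
  also have "\<dots> = (\<Sum>v\<in>D. \<Sum>b\<in>UNIV. if b \<in> dual_code C then of_nat (card C) * P b v else 0)"
    by (intro sum.cong refl) (simp add: sum_char_dotp[OF assms] flip: sum_distrib_right)
  also have "\<dots> = (\<Sum>v\<in>D. \<Sum>b\<in>dual_code C. of_nat (card C) * P b v)"
    by (simp add: sum.If_cases)
  also have "\<dots> = of_nat (card C) * jac (dual_code C) D w x"
    unfolding jac_eq_sum_prod P_def sum_distrib_left by (rule sum.swap)
  finally show ?thesis ..
qed

lemma jac_dual_right:
  fixes chr :: "'a::{comm_ring_1,finite} \<Rightarrow> complex" and C D :: "('a ^ 'n) set"
  assumes "additive_char chr" and "additive_code D" and "detects_dual chr D"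
  shows "of_nat (card D) * jac C (dual_code D) w x =
         jac C D w (\<lambda>(a1, a2, a3). \<Sum>b\<in>UNIV. chr (a2 * b) * x (a1, b, a3))"
  using jac_dual_left[OF assms, of C w "\<lambda>(a1, a2, a3). x (a2, a1, a3)"]
  by (subst (1 2) jac_swap) simp

lemma jac_dual_both:
  fixes chr :: "'a::{comm_ring_1,finite} \<Rightarrow> complex" and C D :: "('a ^ 'n) set"
  assumes chr: "additive_char chr"
    and C: "additive_code C" "detects_dual chr C" and D: "additive_code D" "detects_dual chr D"
  shows "of_nat (card C) * of_nat (card D) * jac (dual_code C) (dual_code D) w x =
         jac C D w (\<lambda>(a1, a2, a3). \<Sum>b1\<in>UNIV. \<Sum>b2\<in>UNIV. chr (a1 * b1 + a2 * b2) * x (b1, b2, a3))"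
proof -
  define y where "y = (\<lambda>(a1, a2, a3). \<Sum>b\<in>UNIV. chr (a1 * b) * x (b, a2, a3))"
  have transform: "(\<lambda>(a1, a2, a3). \<Sum>b\<in>UNIV. chr (a2 * b) * y (a1, b, a3)) =
        (\<lambda>(a1, a2, a3). \<Sum>b1\<in>UNIV. \<Sum>b2\<in>UNIV. chr (a1 * b1 + a2 * b2) * x (b1, b2, a3))"
  proof (intro ext, clarify)
    fix a1 a2 a3 :: 'a
    have "(\<Sum>b\<in>UNIV. chr (a2 * b) * y (a1, b, a3)) =
          (\<Sum>b2\<in>UNIV. \<Sum>b1\<in>UNIV. chr (a1 * b1) * chr (a2 * b2) * x (b1, b2, a3))"
      unfolding y_def by (simp add: sum_distrib_left mult_ac)
    also have "\<dots> = (\<Sum>b1\<in>UNIV. \<Sum>b2\<in>UNIV. chr (a1 * b1 + a2 * b2) * x (b1, b2, a3))"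
      using chr unfolding additive_char_def by (subst sum.swap) simp
    finally show "(\<Sum>b\<in>UNIV. chr (a2 * b) * y (a1, b, a3)) =
          (\<Sum>b1\<in>UNIV. \<Sum>b2\<in>UNIV. chr (a1 * b1 + a2 * b2) * x (b1, b2, a3))" .
  qed
  have "of_nat (card C) * of_nat (card D) * jac (dual_code C) (dual_code D) w x =
        of_nat (card D) * jac C (dual_code D) w y"
    using jac_dual_left[OF chr C, of "dual_code D" w x] unfolding y_def by (simp add: mult_ac)
  also have "\<dots> = jac C D w (\<lambda>(a1, a2, a3). \<Sum>b\<in>UNIV. chr (a2 * b) * y (a1, b, a3))"
    by (rule jac_dual_right[OF chr D])
  finally show ?thesis
    unfolding transform .
qed

theorem corollary3p4:
  fixes chr :: "'a::{comm_ring_1,finite} \<Rightarrow> complex"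
    and C D :: "('a ^ 'n) set" and w :: "'a ^ 'n"
  assumes setting: "(Fq_setting chr \<and> subspace_code C \<and> subspace_code D)
                  \<or> (Zk_setting chr \<and> additive_code C \<and> additive_code D)"
  shows "(\<forall>x :: 'a \<times> 'a \<times> 'a \<Rightarrow> complex.
           jac (dual_code C) D w x =
             (1 / of_nat (card C)) *
             jac C D w (\<lambda>(a1, a2, a3). \<Sum>b\<in>UNIV. chr (a1 * b) * x (b, a2, a3))) \<and>
         (\<forall>x :: 'a \<times> 'a \<times> 'a \<Rightarrow> complex.
           jac (dual_code C) (dual_code D) w x =
             (1 / (of_nat (card C) * of_nat (card D))) *
             jac C D w (\<lambda>(a1, a2, a3). \<Sum>b1\<in>UNIV. \<Sum>b2\<in>UNIV.
                          chr (a1 * b1 + a2 * b2) * x (b1, b2, a3)))"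
proof -
  have "additive_char chr \<and> additive_code C \<and> detects_dual chr C
      \<and> additive_code D \<and> detects_dual chr D"
    using setting
  proof (elim disjE conjE)
    assume "Fq_setting chr" "subspace_code C" "subspace_code D"
    moreover from \<open>Fq_setting chr\<close> have "\<forall>x::'a. x \<noteq> 0 \<longrightarrow> (\<exists>y. x * y = 1)"
      unfolding Fq_setting_def by blast
    ultimately show ?thesis
      by (simp add: additive_char_if_Fq_setting char_one_neq_one_if_Fq_setting
          additive_code_if_subspace_code detects_dual_if_subspace_code)
  next
    assume "Zk_setting chr" "additive_code C" "additive_code D"
    then show ?thesis
      by (simp add: additive_char_if_Zk_setting char_neq_one_if_Zk_setting detects_dual_if_nontrivial)
  qed
  then have chr: "additive_char chr"
    and C: "additive_code C" "detects_dual chr C" and D: "additive_code D" "detects_dual chr D"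
    by auto
  have "card C \<noteq> 0" "card D \<noteq> 0"
    using C(1) D(1) unfolding additive_code_def by auto
  then show ?thesis
    using jac_dual_left[OF chr C] jac_dual_both[OF chr C D] by (simp add: field_simps)
qed

end
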